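(* Let $k$ be an algebraically closed field of characteristic zero. Let $s,m,d$ be nonnegative integers with $d\ge m-1$. Let $X\subset\mathbb{P}^2_k$ be a generic union of an $m$-multiple point $mP$ and $s$ $2$-dots $Z_1,\dots,Z_s$. Then $X$ has good postulation in degree $d$, i.e. $$h^0(\mathcal{I}_X(d))=\max\left\{\binom{d+2}{2}-\binom{m+1}{2}-2s,\,0\right\}.$$
   Context: For a point $P\in\mathbb{P}^2$ and an integer $m\ge 1$, the $m$-multiple point $mP$ is the zero-dimensional subscheme defined by the ideal sheaf $\mathcal{I}_P^m$ (for $m=0$ it is empty); it has length $\binom{m+1}{2}$. A double point is $2P$. A $2$-dot is a subscheme of length $2$ of a double point (i.e. a point together with a tangent direction). "Generic union" means the point $P$ and the $2$-dots are chosen generically (in a nonempty open subset of the corresponding parameter space). $\mathcal{I}_X$ is the ideal sheaf of $X$ and $h^0(\mathcal{F})=\dim_k H^0(\mathbb{P}^2,\mathcal{F})$. *)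

theory Defs
  imports Main "HOL-Computational_Algebra.Polynomial" "HOL-Library.Poly_Mapping" "HOL-Library.Function_Algebras"
begin

definition alg_closed :: "'k::field itself \<Rightarrow> bool" where
  "alg_closed _ \<longleftrightarrow> (\<forall>p::'k poly. degree p \<ge> 1 \<longrightarrow> (\<exists>x. poly p x = 0))"

text \<open>Homogeneous ternary forms of degree d over k, represented by their coefficient
  functions on exponent triples (a,b,c) (monomial x^a y^b z^c), supported on a+b+c = d.
  This is H^0(O_P2(d)), a k-vector space under pointwise scaling.\<close>
definition forms :: "nat \<Rightarrow> (nat \<times> nat \<times> nat \<Rightarrow> 'k::field) set" where
  "forms d = {F. \<forall>a b c. F (a,b,c) \<noteq> 0 \<longrightarrow> a + b + c = d}"

definition monoms :: "nat \<Rightarrow> (nat \<times> nat \<times> nat) set" where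
  "monoms d = {(a,b,c). a + b + c = d}"

text \<open>Falling factorial a (a-1) ... (a-i+1) in k (zero if i > a).\<close>
definition ffact :: "nat \<Rightarrow> nat \<Rightarrow> 'k::field" where
  "ffact a i = (\<Prod>t<i. of_nat (a - t))"

definition pderiv_at ::
  "nat \<Rightarrow> (nat \<times> nat \<times> nat \<Rightarrow> 'k::field) \<Rightarrow> nat \<times> nat \<times> nat \<Rightarrow> 'k \<times> 'k \<times> 'k \<Rightarrow> 'k" where
  "pderiv_at d F ijl p =
     (case ijl of (i,j,l) \<Rightarrow> case p of (p0,p1,p2) \<Rightarrow>
       (\<Sum>(a,b,c)\<in>monoms d. F (a,b,c) * ffact a i * ffact b j * ffact c l
            * p0 ^ (a - i) * p1 ^ (b - j) * p2 ^ (c - l)))"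

definition eval_form :: "nat \<Rightarrow> (nat \<times> nat \<times> nat \<Rightarrow> 'k::field) \<Rightarrow> 'k \<times> 'k \<times> 'k \<Rightarrow> 'k" where
  "eval_form d F p = pderiv_at d F (0,0,0) p"

text \<open>F lies in (I_P^m)(d), P = [p]: in characteristic zero this means that all partial
  derivatives of F of order < m vanish at p (the local Taylor expansion at P lies in the
  m-th power of the maximal ideal).\<close>
definition in_mult_point :: "nat \<Rightarrow> nat \<Rightarrow> 'k::field \<times> 'k \<times> 'k \<Rightarrow> (nat \<times> nat \<times> nat \<Rightarrow> 'k) \<Rightarrow> bool" where
  "in_mult_point d m p F \<longleftrightarrow> (\<forall>i j l. i + j + l < m \<longrightarrow> pderiv_at d F (i,j,l) p = 0)"

text \<open>F lies in the ideal of the 2-dot supported at Q = [q] with tangent direction given by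
  the vector w (not proportional to q): F(q) = 0 and the derivative of F in direction w at q
  vanishes.\<close>
definition in_2dot :: "nat \<Rightarrow> 'k::field \<times> 'k \<times> 'k \<Rightarrow> 'k \<times> 'k \<times> 'k \<Rightarrow> (nat \<times> nat \<times> nat \<Rightarrow> 'k) \<Rightarrow> bool" where
  "in_2dot d q w F \<longleftrightarrow> eval_form d F q = 0 \<and>
     (case w of (w0,w1,w2) \<Rightarrow>
        w0 * pderiv_at d F (1,0,0) q + w1 * pderiv_at d F (0,1,0) q + w2 * pderiv_at d F (0,0,1) q = 0)"

definition indep2 :: "'k::field \<times> 'k \<times> 'k \<Rightarrow> 'k \<times> 'k \<times> 'k \<Rightarrow> bool" where
  "indep2 q w \<longleftrightarrow> (case q of (q0,q1,q2) \<Rightarrow> case w of (w0,w1,w2) \<Rightarrow>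
      q1*w2 - q2*w1 \<noteq> 0 \<or> q2*w0 - q0*w2 \<noteq> 0 \<or> q0*w1 - q1*w0 \<noteq> 0)"

text \<open>H^0(I_X(d)) for X = mP \<union> Z_1 \<union> ... \<union> Z_s, Z_i the 2-dot at q i with direction w i.\<close>
definition H0_IX :: "nat \<Rightarrow> nat \<Rightarrow> 'k::field \<times> 'k \<times> 'k \<Rightarrow> nat \<Rightarrow> (nat \<Rightarrow> 'k \<times> 'k \<times> 'k)
    \<Rightarrow> (nat \<Rightarrow> 'k \<times> 'k \<times> 'k) \<Rightarrow> (nat \<times> nat \<times> nat \<Rightarrow> 'k) set" where
  "H0_IX d m p s q w = {F \<in> forms d. in_mult_point d m p F \<and> (\<forall>i<s. in_2dot d (q i) (w i) F)}"

definition h0_IX :: "nat \<Rightarrow> nat \<Rightarrow> 'k::field \<times> 'k \<times> 'k \<Rightarrow> nat \<Rightarrow> (nat \<Rightarrow> 'k \<times> 'k \<times> 'k)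
    \<Rightarrow> (nat \<Rightarrow> 'k \<times> 'k \<times> 'k) \<Rightarrow> nat" where
  "h0_IX d m p s q w = vector_space.dim (\<lambda>c F x. c * F x) (H0_IX d m p s q w)"

definition mpoly_eval :: "((nat \<Rightarrow>\<^sub>0 nat) \<Rightarrow>\<^sub>0 'k::field) \<Rightarrow> (nat \<Rightarrow> 'k) \<Rightarrow> 'k" where
  "mpoly_eval G x = (\<Sum>mon\<in>Poly_Mapping.keys G. Poly_Mapping.lookup G mon * (\<Prod>i\<in>Poly_Mapping.keys mon. x i ^ Poly_Mapping.lookup mon i))"

definition mpoly_in_vars :: "((nat \<Rightarrow>\<^sub>0 nat) \<Rightarrow>\<^sub>0 'k::field) \<Rightarrow> nat set \<Rightarrow> bool" where
  "mpoly_in_vars G V \<longleftrightarrow> (\<forall>mon\<in>Poly_Mapping.keys G. Poly_Mapping.keys mon \<subseteq> V)"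

text \<open>Parameter vector x : nat => k encodes p = (x0,x1,x2), and for i < s the point
  q i and tangent vector w i in the coordinates 3+6i, ..., 3+6i+5.\<close>
definition par_p :: "(nat \<Rightarrow> 'k) \<Rightarrow> 'k \<times> 'k \<times> 'k" where
  "par_p x = (x 0, x 1, x 2)"
definition par_q :: "(nat \<Rightarrow> 'k) \<Rightarrow> nat \<Rightarrow> 'k \<times> 'k \<times> 'k" where
  "par_q x i = (x (3+6*i), x (3+6*i+1), x (3+6*i+2))"
definition par_w :: "(nat \<Rightarrow> 'k) \<Rightarrow> nat \<Rightarrow> 'k \<times> 'k \<times> 'k" where
  "par_w x i = (x (3+6*i+3), x (3+6*i+4), x (3+6*i+5))"

end

theory Submission
  imports Defs "Jordan_Normal_Form.Determinant"
begin

text \<open>In characteristic zero a nonzero form does not vanish identically, and two linearly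
  independent forms \<open>F\<close>, \<open>G\<close> have a nonvanishing Wronskian \<open>F D\<^sub>w G - G D\<^sub>w F\<close> at some point
  \<open>Q\<close> in some direction \<open>w\<close>, for otherwise \<open>F/G\<close> would be constant along every line. Hence a
  2-dot at a suitable position imposes two independent conditions on any linear system of
  dimension at least two, and its support point one condition on a system of dimension one.
  The \<open>m\<close>-fold point \<open>[0:0:1]\<close> imposes the \<open>(m+1 choose 2)\<close> independent conditions that the
  coefficients of \<open>x^i y^j z^(d-i-j)\<close>, \<open>i + j < m\<close>, vanish; this needs \<open>m \<le> d + 1\<close>. Adding the
  2-dots one at a time gives a configuration at which a maximal square minor of the matrix of
  all conditions is nonzero. This minor is a polynomial in the coordinates of \<open>P\<close>, the \<open>Q\<^sub>i\<close>
  and the tangent vectors; multiplied by the \<open>z\<close>-coordinate of \<open>P\<close> (which lets Euler's relation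
  reduce the multiple-point condition to derivatives in \<open>x\<close> and \<open>y\<close>) it is the polynomial \<open>G\<close>
  of the theorem: wherever \<open>G\<close> does not vanish, the conditions are independent.\<close>

section \<open>Linear conditions given by coefficient vectors\<close>

definition coeff_pair :: "'a set \<Rightarrow> ('a \<Rightarrow> 'k::field) \<Rightarrow> ('a \<Rightarrow> 'k) \<Rightarrow> 'k" where
  "coeff_pair C \<kappa> F = (\<Sum>c\<in>C. F c * \<kappa> c)"

definition supported_on :: "('a \<Rightarrow> 'k::zero) \<Rightarrow> 'a set \<Rightarrow> bool" where
  "supported_on F A \<longleftrightarrow> (\<forall>c. c \<notin> A \<longrightarrow> F c = 0)"

definition coeff_mat :: "('a \<Rightarrow> 'k) list \<Rightarrow> 'a list \<Rightarrow> 'k mat" where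
  "coeff_mat Ks Cs = mat (length Ks) (length Cs) (\<lambda>(i, j). (Ks ! i) (Cs ! j))"

definition fun_of_vec :: "'a list \<Rightarrow> 'k vec \<Rightarrow> 'a \<Rightarrow> 'k::field" where
  "fun_of_vec Cs v c = (\<Sum>j<length Cs. if Cs ! j = c then v $ j else 0)"

lemma coeff_pair_0 [simp]: "coeff_pair C \<kappa> 0 = 0"
  by (simp add: coeff_pair_def)

lemma coeff_pair_add: "coeff_pair C \<kappa> (\<lambda>c. F c + G c) = coeff_pair C \<kappa> F + coeff_pair C \<kappa> G"
  by (simp add: coeff_pair_def sum.distrib algebra_simps)

lemma coeff_pair_diff: "coeff_pair C \<kappa> (\<lambda>c. F c - G c) = coeff_pair C \<kappa> F - coeff_pair C \<kappa> G"
  by (simp add: coeff_pair_def sum_subtractf algebra_simps)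

lemma coeff_pair_scale: "coeff_pair C \<kappa> (\<lambda>c. a * F c) = a * coeff_pair C \<kappa> F"
  by (simp add: coeff_pair_def sum_distrib_left algebra_simps)

lemma coeff_pair_lincomb:
  "finite B \<Longrightarrow> coeff_pair C \<kappa> (\<lambda>c. \<Sum>b\<in>B. a b * f b c) = (\<Sum>b\<in>B. a b * coeff_pair C \<kappa> (f b))"
  unfolding coeff_pair_def sum_distrib_left sum_distrib_right by (subst sum.swap) (simp add: mult_ac)

lemma fun_of_vec_nth: "distinct Cs \<Longrightarrow> j < length Cs \<Longrightarrow> fun_of_vec Cs v (Cs ! j) = v $ j"
  unfolding fun_of_vec_def
  by (subst sum.remove[of _ j]) (auto simp: nth_eq_iff_index_eq intro!: sum.neutral)

lemma supported_on_fun_of_vec: "supported_on (fun_of_vec Cs v) (set Cs)"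
  by (auto simp: supported_on_def fun_of_vec_def intro!: sum.neutral)

lemma fun_of_vec_restrict:
  assumes "distinct Cs" "supported_on F (set Cs)"
  shows "fun_of_vec Cs (vec (length Cs) (\<lambda>j. F (Cs ! j))) = F"
proof
  fix c
  show "fun_of_vec Cs (vec (length Cs) (\<lambda>j. F (Cs ! j))) c = F c"
  proof (cases "c \<in> set Cs")
    case True
    then obtain j where "j < length Cs" "c = Cs ! j" by (auto simp: in_set_conv_nth)
    then show ?thesis by (simp add: fun_of_vec_nth[OF assms(1)])
  next
    case False
    then show ?thesis using assms(2) supported_on_fun_of_vec unfolding supported_on_def by metis
  qed
qed

lemma fun_of_vec_eq_0_iff:
  assumes "distinct Cs" "v \<in> carrier_vec (length Cs)"
  shows "fun_of_vec Cs v = 0 \<longleftrightarrow> v = 0\<^sub>v (length Cs)"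
proof
  assume "fun_of_vec Cs v = 0"
  then show "v = 0\<^sub>v (length Cs)"
    using assms fun_of_vec_nth[OF assms(1), of _ v] by (intro eq_vecI) auto
qed (auto simp: fun_of_vec_def fun_eq_iff intro!: sum.neutral)

lemma coeff_mat_mult_vec:
  assumes "finite C" "set Cs \<subseteq> C" "v \<in> carrier_vec (length Cs)" "i < length Ks"
  shows "(coeff_mat Ks Cs *\<^sub>v v) $ i = coeff_pair C (Ks ! i) (fun_of_vec Cs v)"
proof -
  have "coeff_pair C (Ks ! i) (fun_of_vec Cs v) =
      (\<Sum>j<length Cs. \<Sum>c\<in>C. if Cs ! j = c then v $ j * (Ks ! i) c else 0)"
    unfolding coeff_pair_def fun_of_vec_def sum_distrib_right by (subst sum.swap, intro sum.cong refl) simp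
  also have "\<dots> = (\<Sum>j<length Cs. v $ j * (Ks ! i) (Cs ! j))"
    using assms(1) subsetD[OF assms(2) nth_mem] by (intro sum.cong refl) (auto simp: sum.delta)
  finally show ?thesis
    using assms(3,4) by (simp add: coeff_mat_def scalar_prod_def atLeast0LessThan mult_ac)
qed

lemma det_coeff_mat_nonzero_iff:
  assumes C: "finite C" "set Cs \<subseteq> C" and Cs: "distinct Cs" "length Cs = length Ks"
  shows "det (coeff_mat Ks Cs) \<noteq> 0 \<longleftrightarrow>
    (\<forall>F. supported_on F (set Cs) \<longrightarrow> (\<forall>\<kappa>\<in>set Ks. coeff_pair C \<kappa> F = 0) \<longrightarrow> F = 0)"
proof -
  let ?n = "length Ks"
  have car: "coeff_mat Ks Cs \<in> carrier_mat ?n ?n"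
    using Cs by (simp add: coeff_mat_def)
  have kernel: "coeff_mat Ks Cs *\<^sub>v v = 0\<^sub>v ?n \<longleftrightarrow> (\<forall>\<kappa>\<in>set Ks. coeff_pair C \<kappa> (fun_of_vec Cs v) = 0)"
    if v: "v \<in> carrier_vec ?n" for v
  proof -
    have "(coeff_mat Ks Cs *\<^sub>v v) $ i = coeff_pair C (Ks ! i) (fun_of_vec Cs v)" if "i < ?n" for i
      using coeff_mat_mult_vec[OF C _ that] v Cs by simp
    then show ?thesis
      using car by (force simp: vec_eq_iff in_set_conv_nth)
  qed
  have "(\<exists>v. v \<in> carrier_vec ?n \<and> v \<noteq> 0\<^sub>v ?n \<and> coeff_mat Ks Cs *\<^sub>v v = 0\<^sub>v ?n) \<longleftrightarrow>
      (\<exists>F. supported_on F (set Cs) \<and> (\<forall>\<kappa>\<in>set Ks. coeff_pair C \<kappa> F = 0) \<and> F \<noteq> 0)"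
  proof
    assume "\<exists>v. v \<in> carrier_vec ?n \<and> v \<noteq> 0\<^sub>v ?n \<and> coeff_mat Ks Cs *\<^sub>v v = 0\<^sub>v ?n"
    then show "\<exists>F. supported_on F (set Cs) \<and> (\<forall>\<kappa>\<in>set Ks. coeff_pair C \<kappa> F = 0) \<and> F \<noteq> 0"
      using kernel fun_of_vec_eq_0_iff[OF Cs(1)] Cs(2) supported_on_fun_of_vec by metis
  next
    assume "\<exists>F. supported_on F (set Cs) \<and> (\<forall>\<kappa>\<in>set Ks. coeff_pair C \<kappa> F = 0) \<and> F \<noteq> 0"
    then obtain F where F: "supported_on F (set Cs)" "\<forall>\<kappa>\<in>set Ks. coeff_pair C \<kappa> F = 0" "F \<noteq> 0"
      by blast
    define v where "v = vec (length Cs) (\<lambda>j. F (Cs ! j))"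
    have "fun_of_vec Cs v = F"
      unfolding v_def using fun_of_vec_restrict[OF Cs(1) F(1)] .
    then show "\<exists>v. v \<in> carrier_vec ?n \<and> v \<noteq> 0\<^sub>v ?n \<and> coeff_mat Ks Cs *\<^sub>v v = 0\<^sub>v ?n"
      using kernel F Cs fun_of_vec_eq_0_iff[OF Cs(1), of v] by (intro exI[of _ v]) (auto simp: v_def)
  qed
  then show ?thesis
    using det_0_iff_vec_prod_zero_field[OF car] by blast
qed

lemma det_zero_row:
  assumes "A \<in> carrier_mat n n" "k < n" "\<And>j. j < n \<Longrightarrow> A $$ (k, j) = 0"
  shows "det A = 0"
proof -
  have "(\<Prod>i = 0..<n. A $$ (i, p i)) = 0" if "p permutes {0..<n}" for p
    using assms that by (intro prod_zero) (auto intro!: bexI[of _ k] simp: permutes_in_image)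
  then show ?thesis
    unfolding det_def'[OF assms(1)] by (intro sum.neutral) simp
qed

text \<open>The kernel vector of Gaussian elimination attached to the free column \<open>b\<close>, when \<open>Cs\<close> are the
  pivot columns.\<close>

definition special_solution :: "'a set \<Rightarrow> ('a \<Rightarrow> 'k::field) list \<Rightarrow> 'a list \<Rightarrow> 'a \<Rightarrow> ('a \<Rightarrow> 'k) \<Rightarrow> bool" where
  "special_solution C Ks Cs b f \<longleftrightarrow>
     f b = 1 \<and> supported_on f (insert b (set Cs)) \<and> (\<forall>\<kappa>\<in>set Ks. coeff_pair C \<kappa> f = 0)"

lemma special_solution_nonzero: "special_solution C Ks Cs b f \<Longrightarrow> f \<noteq> 0"
  by (auto simp: special_solution_def)

lemma special_solution_free_column:
  "special_solution C Ks Cs b f \<Longrightarrow> c \<notin> set Cs \<Longrightarrow> f c = (if c = b then 1 else 0)"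
  by (auto simp: special_solution_def supported_on_def)

lemma exists_special_solution:
  assumes C: "finite C" "set Cs \<subseteq> C" and Cs: "distinct Cs" "length Cs = length Ks"
    and det: "det (coeff_mat Ks Cs) \<noteq> 0" and b: "b \<in> C" "b \<notin> set Cs"
  shows "\<exists>f. special_solution C Ks Cs b f"
proof -
  have C': "finite C" "set (Cs @ [b]) \<subseteq> C" and Cs': "distinct (Cs @ [b])" "length (Cs @ [b]) = length (Ks @ [0])"
    using C Cs b by auto
  \<comment> \<open>Adding the zero condition and the column \<open>b\<close> gives a singular square matrix.\<close>
  have "det (coeff_mat (Ks @ [0]) (Cs @ [b])) = 0"
    by (rule det_zero_row[of _ "Suc (length Ks)" "length Ks"]) (use Cs in \<open>auto simp: coeff_mat_def\<close>)
  then obtain g where g: "supported_on g (insert b (set Cs))" "\<forall>\<kappa>\<in>set Ks. coeff_pair C \<kappa> g = 0" "g \<noteq> 0"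
    using det_coeff_mat_nonzero_iff[OF C' Cs'] by auto
  have "g b \<noteq> 0"
  proof
    assume "g b = 0"
    with g(1) have "supported_on g (set Cs)" by (auto simp: supported_on_def)
    with g(2,3) det det_coeff_mat_nonzero_iff[OF C Cs] show False by blast
  qed
  then have "special_solution C Ks Cs b (\<lambda>c. g c / g b)"
    using g(1,2) by (auto simp: special_solution_def supported_on_def coeff_pair_def sum_divide_distrib[symmetric])
  then show ?thesis by blast
qed

lemma eq_sum_special_solutions:
  assumes C: "finite C" "set Cs \<subseteq> C" and Cs: "distinct Cs" "length Cs = length Ks"
    and det: "det (coeff_mat Ks Cs) \<noteq> 0"
    and B: "finite B" "B \<inter> set Cs = {}" and f: "\<And>b. b \<in> B \<Longrightarrow> special_solution C Ks Cs b (f b)"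
    and F: "supported_on F (set Cs \<union> B)" "\<forall>\<kappa>\<in>set Ks. coeff_pair C \<kappa> F = 0"
  shows "F = (\<lambda>c. \<Sum>b\<in>B. F b * f b c)"
proof -
  define G where "G = (\<lambda>c. F c - (\<Sum>b\<in>B. F b * f b c))"
  have "G c = 0" if c: "c \<notin> set Cs" for c
  proof -
    have "(\<Sum>b\<in>B. F b * f b c) = (\<Sum>b\<in>B. if c = b then F c else 0)"
      using special_solution_free_column[OF f c] by (intro sum.cong) auto
    also have "\<dots> = F c"
      using F(1) c B(1) by (auto simp: supported_on_def)
    finally show ?thesis
      by (simp add: G_def)
  qed
  moreover have "\<forall>\<kappa>\<in>set Ks. coeff_pair C \<kappa> G = 0"
    using F(2) f unfolding G_def coeff_pair_diff coeff_pair_lincomb[OF B(1)]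
    by (simp add: special_solution_def)
  ultimately have "G = 0"
    using det det_coeff_mat_nonzero_iff[OF C Cs] unfolding supported_on_def by blast
  show ?thesis
  proof
    fix c
    have "G c = 0"
      using \<open>G = 0\<close> by (simp add: zero_fun_def)
    then show "F c = (\<Sum>b\<in>B. F b * f b c)"
      unfolding G_def by (rule right_minus_eq[THEN iffD1])
  qed
qed

lemma det_coeff_mat_append_nonzero:
  assumes C: "finite C" "set Cs \<subseteq> C" and Cs: "distinct Cs" "length Cs = length Ks"
    and det: "det (coeff_mat Ks Cs) \<noteq> 0"
    and bs: "distinct bs" "set bs \<subseteq> C - set Cs" "length bs = length Ks'"
    and f: "\<And>b. b \<in> set bs \<Longrightarrow> special_solution C Ks Cs b (f b)"
    and new: "\<And>a. \<forall>\<kappa>\<in>set Ks'. (\<Sum>b\<in>set bs. a b * coeff_pair C \<kappa> (f b)) = 0 \<Longrightarrow> \<forall>b\<in>set bs. a b = 0"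
  shows "det (coeff_mat (Ks @ Ks') (Cs @ bs)) \<noteq> 0"
proof -
  have C': "set (Cs @ bs) \<subseteq> C" and Cs': "distinct (Cs @ bs)" "length (Cs @ bs) = length (Ks @ Ks')"
    using C Cs bs by auto
  show ?thesis
    unfolding det_coeff_mat_nonzero_iff[OF C(1) C' Cs']
  proof (intro allI impI)
    fix F assume supp: "supported_on F (set (Cs @ bs))" and sat: "\<forall>\<kappa>\<in>set (Ks @ Ks'). coeff_pair C \<kappa> F = 0"
    have F_eq: "F = (\<lambda>c. \<Sum>b\<in>set bs. F b * f b c)"
      by (rule eq_sum_special_solutions[OF C Cs det _ _ f]) (use supp sat bs(2) in auto)
    have "\<forall>\<kappa>\<in>set Ks'. (\<Sum>b\<in>set bs. F b * coeff_pair C \<kappa> (f b)) = 0"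
      using sat coeff_pair_lincomb[of "set bs" C _ F f] F_eq by simp
    then have "\<forall>b\<in>set bs. F b = 0"
      by (rule new)
    then have "(\<lambda>c. \<Sum>b\<in>set bs. F b * f b c) = 0"
      by (simp add: fun_eq_iff)
    then show "F = 0"
      by (rule trans[OF F_eq])
  qed
qed

lemma trivial_solution_2x2:
  fixes x y :: "'k::field"
  assumes "x * a1 + y * a2 = 0" "x * b1 + y * b2 = 0" "a1 * b2 - a2 * b1 \<noteq> 0"
  shows "x = 0 \<and> y = 0"
proof -
  have "x * (a1 * b2 - a2 * b1) = b2 * (x * a1 + y * a2) - a2 * (x * b1 + y * b2)"
    and "y * (a1 * b2 - a2 * b1) = a1 * (x * b1 + y * b2) - b1 * (x * a1 + y * a2)"
    by (simp_all add: algebra_simps)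
  then show ?thesis
    using assms by simp
qed

lemma vector_space_fun: "vector_space (\<lambda>(c::'k::field) (F::'a \<Rightarrow> 'k) x. c * F x)"
  by unfold_locales (auto simp: fun_eq_iff algebra_simps)

lemma sum_apply: "(\<Sum>b\<in>B. g b) c = (\<Sum>b\<in>B. g b c)"
  by (induction B rule: infinite_finite_induct) auto

definition coeff_kernel :: "'a set \<Rightarrow> ('a \<Rightarrow> 'k::field) list \<Rightarrow> ('a \<Rightarrow> 'k) set" where
  "coeff_kernel C Ks = {F. supported_on F C \<and> (\<forall>\<kappa>\<in>set Ks. coeff_pair C \<kappa> F = 0)}"

context
begin

interpretation fun_vs: vector_space "\<lambda>(c::'k::field) (F::'a \<Rightarrow> 'k) x. c * F x"
  by (rule vector_space_fun)

lemma subspace_coeff_kernel: "fun_vs.subspace (coeff_kernel C Ks)"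
  by (auto simp: fun_vs.subspace_def coeff_kernel_def supported_on_def plus_fun_def
      coeff_pair_add coeff_pair_scale)

lemma coeff_kernel_eq_span_special_solutions:
  assumes C: "finite C" "set Cs \<subseteq> C" and Cs: "distinct Cs" "length Cs = length Ks"
    and det: "det (coeff_mat Ks Cs) \<noteq> 0"
    and f: "\<And>b. b \<in> C - set Cs \<Longrightarrow> special_solution C Ks Cs b (f b)"
  shows "coeff_kernel C Ks = fun_vs.span (f ` (C - set Cs))"
proof
  show "coeff_kernel C Ks \<subseteq> fun_vs.span (f ` (C - set Cs))"
  proof
    fix F assume "F \<in> coeff_kernel C Ks"
    then have "F = (\<lambda>c. \<Sum>b\<in>C - set Cs. F b * f b c)"
      using C by (intro eq_sum_special_solutions[OF C Cs det _ _ f]) (auto simp: coeff_kernel_def Un_absorb1)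
    also have "\<dots> = (\<Sum>b\<in>C - set Cs. (\<lambda>c. F b * f b c))"
      by (simp add: sum_apply fun_eq_iff)
    also have "\<dots> \<in> fun_vs.span (f ` (C - set Cs))"
      by (intro fun_vs.span_sum fun_vs.span_scale fun_vs.span_base) simp
    finally show "F \<in> fun_vs.span (f ` (C - set Cs))" .
  qed
  have "f b \<in> coeff_kernel C Ks" if "b \<in> C - set Cs" for b
    using f[OF that] that C(2) by (auto simp: special_solution_def supported_on_def coeff_kernel_def)
  then show "fun_vs.span (f ` (C - set Cs)) \<subseteq> coeff_kernel C Ks"
    by (intro fun_vs.span_minimal[OF _ subspace_coeff_kernel]) auto
qed

lemma independent_special_solutions:
  fixes f :: "'a \<Rightarrow> 'a \<Rightarrow> 'k::field"
  assumes B: "finite B" "B \<inter> set Cs = {}" and f: "\<And>b. b \<in> B \<Longrightarrow> special_solution C Ks Cs b (f b)"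
  shows "inj_on f B" and "fun_vs.independent (f ` B)"
proof -
  have f_delta: "f b b' = (if b' = b then 1 else 0)" if "b \<in> B" "b' \<in> B" for b b'
    using special_solution_free_column[OF f[OF that(1)]] that B(2) by blast
  show inj: "inj_on f B"
  proof (rule inj_onI)
    fix b b' assume b: "b \<in> B" "b' \<in> B" and eq: "f b = f b'"
    have "f b' b = f b b"
      by (simp only: eq)
    then show "b = b'"
      using f_delta[OF b(2) b(1)] f_delta[OF b(1) b(1)] by (simp split: if_splits)
  qed
  show "fun_vs.independent (f ` B)"
  proof (rule fun_vs.independent_if_scalars_zero)
    fix a :: "('a \<Rightarrow> 'k) \<Rightarrow> 'k" and g
    assume zero: "(\<Sum>g\<in>f ` B. (\<lambda>c. a g * g c)) = 0" and "g \<in> f ` B"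
    then obtain b where b: "b \<in> B" "g = f b" by blast
    have "0 = (\<Sum>g\<in>f ` B. (\<lambda>c. a g * g c)) b"
      using zero by simp
    also have "\<dots> = (\<Sum>b'\<in>B. a (f b') * f b' b)"
      by (simp add: sum_apply sum.reindex[OF inj])
    also have "\<dots> = a (f b)"
      using b(1) by (subst sum.remove[OF B(1) b(1)]) (auto simp: f_delta intro!: sum.neutral split: if_splits)
    finally show "a g = 0" using b(2) by simp
  qed (use B(1) in simp)
qed

lemma dim_coeff_kernel:
  fixes Ks :: "('a \<Rightarrow> 'k::field) list"
  assumes C: "finite C" "set Cs \<subseteq> C" and Cs: "distinct Cs" "length Cs = length Ks"
    and det: "det (coeff_mat Ks Cs) \<noteq> 0"
  shows "vector_space.dim (\<lambda>c F x. c * F x) (coeff_kernel C Ks) = card C - length Ks"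
proof -
  have ex: "\<forall>b\<in>C - set Cs. \<exists>g. special_solution C Ks Cs b g"
    using exists_special_solution[OF C Cs det] by blast
  obtain f where f: "\<And>b. b \<in> C - set Cs \<Longrightarrow> special_solution C Ks Cs b (f b)"
    using bchoice[OF ex] by auto
  have B: "finite (C - set Cs)" "(C - set Cs) \<inter> set Cs = {}"
    using C by auto
  have "coeff_kernel C Ks = fun_vs.span (f ` (C - set Cs))"
    by (rule coeff_kernel_eq_span_special_solutions[OF C Cs det f])
  then have "fun_vs.dim (coeff_kernel C Ks) = card (f ` (C - set Cs))"
    using fun_vs.dim_span_eq_card_independent[OF independent_special_solutions(2)[OF B f]] by simp
  also have "\<dots> = card C - length Ks"
    using card_image[OF independent_special_solutions(1)[OF B f]] C Cs by (simp add: card_Diff_subset distinct_card)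
  finally show ?thesis .
qed

lemma dim_coeff_kernel_eq_0:
  fixes Ks :: "('a \<Rightarrow> 'k::field) list"
  assumes C: "finite C" "set Cs \<subseteq> C" and Cs: "distinct Cs" "length Cs = length Ks"
    and det: "det (coeff_mat Ks Cs) \<noteq> 0" and full: "length Ks = card C" and Ks: "set Ks \<subseteq> set Ks'"
  shows "vector_space.dim (\<lambda>c F x. c * F x) (coeff_kernel C Ks') = 0"
proof -
  have "set Cs = C"
    using C Cs full by (intro card_subset_eq) (simp_all add: distinct_card)
  then have "coeff_kernel C Ks' \<subseteq> fun_vs.span {}"
    using det_coeff_mat_nonzero_iff[OF C Cs] det Ks by (fastforce simp: coeff_kernel_def)
  then have "fun_vs.dim (coeff_kernel C Ks') \<le> card ({} :: ('a \<Rightarrow> 'k) set)"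
    by (rule fun_vs.dim_le_card) simp
  then show ?thesis
    by simp
qed

end

section \<open>Ternary forms and their derivatives\<close>

lemma finite_monoms [simp]: "finite (monoms d)"
proof -
  have "monoms d \<subseteq> {..d} \<times> {..d} \<times> {..d}"
    by (auto simp: monoms_def)
  then show ?thesis
    by (rule finite_subset) auto
qed

lemma card_monoms: "card (monoms d) = (d + 2) choose 2"
proof (induction d)
  case 0
  have "monoms 0 = {(0, 0, 0)}" by (auto simp: monoms_def)
  then show ?case by (simp add: numeral_2_eq_2)
next
  case (Suc d)
  let ?shift = "\<lambda>(a, b, c). (Suc a, b, c)" and ?edge = "\<lambda>b. (0::nat, b, Suc d - b)"
  have split: "monoms (Suc d) = ?shift ` monoms d \<union> ?edge ` {..Suc d}"
  proof -
    have "\<alpha> \<in> monoms (Suc d) \<longleftrightarrow> \<alpha> \<in> ?shift ` monoms d \<union> ?edge ` {..Suc d}" for \<alpha>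
    proof -
      obtain a b c where \<alpha>: "\<alpha> = (a, b, c)" by (cases \<alpha>)
      show ?thesis
      proof (cases a)
        case 0
        then show ?thesis by (auto simp: \<alpha> monoms_def)
      next
        case (Suc a')
        then show ?thesis by (auto simp: \<alpha> monoms_def intro!: image_eqI[of _ _ "(a', b, c)"])
      qed
    qed
    then show ?thesis by blast
  qed
  have "card (monoms (Suc d)) = card (?shift ` monoms d) + card (?edge ` {..Suc d})"
    unfolding split by (subst card_Un_disjoint) auto
  also have "card (?shift ` monoms d) = card (monoms d)"
    by (rule card_image) (auto simp: inj_on_def)
  also have "card (?edge ` {..Suc d}) = d + 2"
    by (subst card_image) (auto simp: inj_on_def)
  finally show ?case using Suc by (simp add: numeral_2_eq_2)
qed

lemma forms_eq: "forms d = {F. supported_on F (monoms d)}"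
  by (auto simp: forms_def supported_on_def monoms_def)

lemma ffact_0 [simp]: "ffact a 0 = 1"
  and ffact_1 [simp]: "ffact a (Suc 0) = of_nat a"
  by (simp_all add: ffact_def)

lemma ffact_Suc: "ffact a (Suc i) = ffact a i * of_nat (a - i)"
  by (simp add: ffact_def)

definition deriv_power :: "nat \<Rightarrow> nat \<Rightarrow> 'k::field \<Rightarrow> 'k" where
  "deriv_power i a x = ffact a i * x ^ (a - i)"

lemma mult_deriv_power_Suc: "x * deriv_power (Suc i) a x = of_nat (a - i) * deriv_power i a x"
proof (cases "a - i")
  case 0
  then show ?thesis by (simp add: deriv_power_def ffact_Suc)
next
  case (Suc n)
  then have "a - Suc i = n" by simp
  with Suc show ?thesis by (simp add: deriv_power_def ffact_Suc mult_ac)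
qed

lemma deriv_power_eq_0: "a < i \<Longrightarrow> deriv_power i a x = 0"
  unfolding deriv_power_def ffact_def by (subst prod_zero) (auto intro: bexI[of _ a])

definition pderiv_coeff :: "nat \<times> nat \<times> nat \<Rightarrow> 'k::field \<times> 'k \<times> 'k \<Rightarrow> nat \<times> nat \<times> nat \<Rightarrow> 'k" where
  "pderiv_coeff ijl p \<alpha> = (case ijl of (i, j, l) \<Rightarrow> case p of (p0, p1, p2) \<Rightarrow> case \<alpha> of (a, b, c) \<Rightarrow>
     ffact a i * ffact b j * ffact c l * p0 ^ (a - i) * p1 ^ (b - j) * p2 ^ (c - l))"

lemma pderiv_at_eq_coeff_pair: "pderiv_at d F ijl p = coeff_pair (monoms d) (pderiv_coeff ijl p) F"
proof -
  obtain i j l p0 p1 p2 where "ijl = (i, j, l)" "p = (p0, p1, p2)"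
    by (cases ijl; cases p) auto
  then show ?thesis
    unfolding pderiv_at_def coeff_pair_def pderiv_coeff_def by (simp add: case_prod_unfold mult.assoc)
qed

lemma pderiv_coeff_eq:
  "pderiv_coeff (i, j, l) (p0, p1, p2) (a, b, c) = deriv_power i a p0 * deriv_power j b p1 * deriv_power l c p2"
  unfolding pderiv_coeff_def deriv_power_def by simp

lemma eval_form_eq:
  "eval_form d F (p0, p1, p2) = (\<Sum>(a, b, c)\<in>monoms d. F (a, b, c) * (p0 ^ a * p1 ^ b * p2 ^ c))"
  unfolding eval_form_def pderiv_at_def by (simp add: ffact_def mult.assoc)

lemma pderiv_at_0_0_1:
  assumes "i + j \<le> d"
  shows "pderiv_at d F (i, j, 0) (0, 0, 1) = ffact i i * ffact j j * F (i, j, d - i - j)"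
proof -
  have at_0: "deriv_power i a 0 = (if a = i then ffact i i else 0)" for i a
    by (cases "a < i") (auto simp: deriv_power_eq_0, auto simp: deriv_power_def)
  have at_1: "deriv_power 0 c 1 = 1" for c
    by (simp add: deriv_power_def)
  have coeff: "pderiv_coeff (i, j, 0) (0, 0, 1) (a, b, c) = (if a = i \<and> b = j then ffact i i * ffact j j else 0)"
    for a b c
    by (simp add: pderiv_coeff_eq at_0 at_1)
  have mem: "(i, j, d - i - j) \<in> monoms d"
    using assms by (simp add: monoms_def)
  have "\<forall>\<alpha>\<in>monoms d - {(i, j, d - i - j)}. F \<alpha> * pderiv_coeff (i, j, 0) (0, 0, 1) \<alpha> = 0"
    by (auto simp: coeff monoms_def split: if_splits)
  then have "coeff_pair (monoms d) (pderiv_coeff (i, j, 0) (0, 0, 1)) F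
      = F (i, j, d - i - j) * pderiv_coeff (i, j, 0) (0, 0, 1) (i, j, d - i - j)"
    unfolding coeff_pair_def by (subst sum.remove[OF finite_monoms mem]) (simp add: sum.neutral)
  then show ?thesis
    by (simp add: pderiv_at_eq_coeff_pair coeff)
qed

lemma euler_pderiv_coeff:
  assumes "a + b + c = d"
  shows "p0 * pderiv_coeff (Suc i, j, l) (p0, p1, p2) (a, b, c) + p1 * pderiv_coeff (i, Suc j, l) (p0, p1, p2) (a, b, c)
    + p2 * pderiv_coeff (i, j, Suc l) (p0, p1, p2) (a, b, c)
    = of_nat (d - i - j - l) * pderiv_coeff (i, j, l) (p0, p1, p2) (a, b, c)"
proof -
  let ?D = "deriv_power i a p0 * deriv_power j b p1 * deriv_power l c p2"
  have "p0 * pderiv_coeff (Suc i, j, l) (p0, p1, p2) (a, b, c) + p1 * pderiv_coeff (i, Suc j, l) (p0, p1, p2) (a, b, c)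
    + p2 * pderiv_coeff (i, j, Suc l) (p0, p1, p2) (a, b, c)
    = (p0 * deriv_power (Suc i) a p0) * deriv_power j b p1 * deriv_power l c p2
      + deriv_power i a p0 * (p1 * deriv_power (Suc j) b p1) * deriv_power l c p2
      + deriv_power i a p0 * deriv_power j b p1 * (p2 * deriv_power (Suc l) c p2)"
    by (simp add: pderiv_coeff_eq mult_ac)
  also have "\<dots> = (of_nat (a - i) + of_nat (b - j) + of_nat (c - l)) * ?D"
    by (simp only: mult_deriv_power_Suc) (simp add: algebra_simps)
  also have "\<dots> = of_nat (d - i - j - l) * ?D"
  proof (cases "i \<le> a \<and> j \<le> b \<and> l \<le> c")
    case True
    then have "d - i - j - l = (a - i) + (b - j) + (c - l)"
      using assms by linarith
    then show ?thesis by simp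
  next
    case False
    then have "?D = 0" by (auto simp: deriv_power_eq_0 not_le)
    then show ?thesis by simp
  qed
  finally show ?thesis
    by (simp add: pderiv_coeff_eq)
qed

lemma euler_pderiv_at:
  "p0 * pderiv_at d F (Suc i, j, l) (p0, p1, p2) + p1 * pderiv_at d F (i, Suc j, l) (p0, p1, p2)
    + p2 * pderiv_at d F (i, j, Suc l) (p0, p1, p2) = of_nat (d - i - j - l) * pderiv_at d F (i, j, l) (p0, p1, p2)"
proof -
  have "p0 * pderiv_at d F (Suc i, j, l) (p0, p1, p2) + p1 * pderiv_at d F (i, Suc j, l) (p0, p1, p2)
      + p2 * pderiv_at d F (i, j, Suc l) (p0, p1, p2)
    = (\<Sum>\<alpha>\<in>monoms d. F \<alpha> * (p0 * pderiv_coeff (Suc i, j, l) (p0, p1, p2) \<alpha>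
        + p1 * pderiv_coeff (i, Suc j, l) (p0, p1, p2) \<alpha> + p2 * pderiv_coeff (i, j, Suc l) (p0, p1, p2) \<alpha>))"
    unfolding pderiv_at_eq_coeff_pair coeff_pair_def
    by (simp add: sum_distrib_left sum.distrib algebra_simps)
  also have "\<dots> = (\<Sum>\<alpha>\<in>monoms d. F \<alpha> * (of_nat (d - i - j - l) * pderiv_coeff (i, j, l) (p0, p1, p2) \<alpha>))"
    by (intro sum.cong refl) (auto simp: monoms_def euler_pderiv_coeff)
  also have "\<dots> = of_nat (d - i - j - l) * pderiv_at d F (i, j, l) (p0, p1, p2)"
    unfolding pderiv_at_eq_coeff_pair coeff_pair_def by (simp add: sum_distrib_left mult_ac)
  finally show ?thesis .
qed

text \<open>At a point off the line \<open>z = 0\<close>, Euler's relation recovers the derivatives involving \<open>z\<close>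
  from those that do not.\<close>

lemma in_mult_point_iff:
  assumes "p2 \<noteq> 0"
  shows "in_mult_point d m (p0, p1, p2) F \<longleftrightarrow>
    (\<forall>i j. i + j < m \<longrightarrow> pderiv_at d F (i, j, 0) (p0, p1, p2) = 0)"
proof
  assume xy: "\<forall>i j. i + j < m \<longrightarrow> pderiv_at d F (i, j, 0) (p0, p1, p2) = 0"
  have "\<forall>i j. i + j + l < m \<longrightarrow> pderiv_at d F (i, j, l) (p0, p1, p2) = 0" for l
  proof (induction l)
    case 0
    then show ?case using xy by simp
  next
    case (Suc l)
    show ?case
    proof (intro allI impI)
      fix i j assume "i + j + Suc l < m"
      then have "p2 * pderiv_at d F (i, j, Suc l) (p0, p1, p2) = 0"
        using euler_pderiv_at[of p0 d F i j l p1 p2] Suc.IH by auto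
      then show "pderiv_at d F (i, j, Suc l) (p0, p1, p2) = 0"
        using assms by simp
    qed
  qed
  then show "in_mult_point d m (p0, p1, p2) F"
    unfolding in_mult_point_def by blast
qed (simp add: in_mult_point_def)

lemma poly_dehomogenized_form:
  assumes "F \<in> forms d"
  shows "poly (\<Sum>a\<le>d. monom (poly (\<Sum>b\<le>d - a. monom (F (a, b, d - a - b)) b) t) a) s = eval_form d F (s, t, 1)"
proof -
  have triangle: "Sigma {..d} (\<lambda>a. {..d - a}) = {(a, b). a + b \<le> d}"
    by auto
  have "poly (\<Sum>a\<le>d. monom (poly (\<Sum>b\<le>d - a. monom (F (a, b, d - a - b)) b) t) a) s
      = (\<Sum>a\<le>d. \<Sum>b\<le>d - a. F (a, b, d - a - b) * (s ^ a * t ^ b * 1 ^ (d - a - b)))"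
    by (simp add: poly_sum poly_monom sum_distrib_right sum_distrib_left mult_ac)
  also have "\<dots> = (\<Sum>(a, b)\<in>{(a, b). a + b \<le> d}. F (a, b, d - a - b) * (s ^ a * t ^ b * 1 ^ (d - a - b)))"
    unfolding triangle[symmetric] by (rule sum.Sigma) auto
  also have "\<dots> = eval_form d F (s, t, 1)"
    unfolding eval_form_eq
    by (rule sum.reindex_bij_witness[of _ "\<lambda>(a, b, c). (a, b)" "\<lambda>(a, b). (a, b, d - a - b)"])
      (auto simp: monoms_def)
  finally show ?thesis .
qed

lemma form_eq_0_if_vanishing:
  fixes F :: "nat \<times> nat \<times> nat \<Rightarrow> 'k::field_char_0"
  assumes F: "F \<in> forms d" and vanish: "\<And>p. eval_form d F p = 0"
  shows "F = 0"
proof -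
  define row where "row a = (\<Sum>b\<le>d - a. monom (F (a, b, d - a - b)) b)" for a
  define P where "P t = (\<Sum>a\<le>d. monom (poly (row a) t) a)" for t
  have "poly (P t) s = eval_form d F (s, t, 1)" for s t
    unfolding P_def row_def by (rule poly_dehomogenized_form[OF F])
  then have P_0: "P t = 0" for t
    using vanish poly_all_0_iff_0 by metis
  have row_0: "row a = 0" if "a \<le> d" for a
  proof -
    have "poly (row a) t = coeff (P t) a" for t
      using that by (simp add: P_def coeff_sum coeff_monom)
    then show ?thesis
      using P_0 poly_all_0_iff_0 by (metis coeff_0)
  qed
  have F_in: "F (a, b, d - a - b) = 0" if "a + b \<le> d" for a b
  proof -
    have "F (a, b, d - a - b) = coeff (row a) b"
      using that by (simp add: row_def coeff_sum coeff_monom)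
    then show ?thesis
      using row_0 that by simp
  qed
  have "F \<alpha> = 0" for \<alpha>
  proof (cases "\<alpha> \<in> monoms d")
    case True
    then obtain a b where "a + b \<le> d" "\<alpha> = (a, b, d - a - b)"
      by (auto simp: monoms_def)
    then show ?thesis using F_in by simp
  next
    case False
    then show ?thesis using F unfolding forms_eq supported_on_def by blast
  qed
  then show "F = 0"
    by (simp add: fun_eq_iff)
qed

definition dir_deriv :: "nat \<Rightarrow> (nat \<times> nat \<times> nat \<Rightarrow> 'k::field) \<Rightarrow> 'k \<times> 'k \<times> 'k \<Rightarrow> 'k \<times> 'k \<times> 'k \<Rightarrow> 'k" where
  "dir_deriv d F q w = (case w of (w0, w1, w2) \<Rightarrow>
     w0 * pderiv_at d F (1, 0, 0) q + w1 * pderiv_at d F (0, 1, 0) q + w2 * pderiv_at d F (0, 0, 1) q)"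

definition dir_deriv_coeff :: "'k::field \<times> 'k \<times> 'k \<Rightarrow> 'k \<times> 'k \<times> 'k \<Rightarrow> nat \<times> nat \<times> nat \<Rightarrow> 'k" where
  "dir_deriv_coeff q w \<alpha> = (case w of (w0, w1, w2) \<Rightarrow>
     w0 * pderiv_coeff (1, 0, 0) q \<alpha> + w1 * pderiv_coeff (0, 1, 0) q \<alpha> + w2 * pderiv_coeff (0, 0, 1) q \<alpha>)"

lemma dir_deriv_eq_coeff_pair: "dir_deriv d F q w = coeff_pair (monoms d) (dir_deriv_coeff q w) F"
  by (cases w) (simp add: dir_deriv_def dir_deriv_coeff_def pderiv_at_eq_coeff_pair coeff_pair_def
      sum_distrib_left sum.distrib algebra_simps)

lemma in_2dot_iff: "in_2dot d q w F \<longleftrightarrow> eval_form d F q = 0 \<and> dir_deriv d F q w = 0"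
  by (cases w) (simp add: in_2dot_def dir_deriv_def)

lemma eval_form_diff_scale: "eval_form d (\<lambda>\<alpha>. F \<alpha> - c * G \<alpha>) p = eval_form d F p - c * eval_form d G p"
  by (simp add: eval_form_def pderiv_at_eq_coeff_pair coeff_pair_diff coeff_pair_scale)

lemma dir_deriv_diff_scale: "dir_deriv d (\<lambda>\<alpha>. F \<alpha> - c * G \<alpha>) q w = dir_deriv d F q w - c * dir_deriv d G q w"
  by (simp add: dir_deriv_eq_coeff_pair coeff_pair_diff coeff_pair_scale)

definition wronskian ::
  "nat \<Rightarrow> (nat \<times> nat \<times> nat \<Rightarrow> 'k::field) \<Rightarrow> (nat \<times> nat \<times> nat \<Rightarrow> 'k) \<Rightarrow> 'k \<times> 'k \<times> 'k \<Rightarrow> 'k \<times> 'k \<times> 'k \<Rightarrow> 'k" where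
  "wronskian d F G q w = eval_form d F q * dir_deriv d G q w - eval_form d G q * dir_deriv d F q w"

definition line_point :: "'k::field \<times> 'k \<times> 'k \<Rightarrow> 'k \<times> 'k \<times> 'k \<Rightarrow> 'k \<Rightarrow> 'k \<times> 'k \<times> 'k" where
  "line_point u v t = (case u of (u0, u1, u2) \<Rightarrow> case v of (v0, v1, v2) \<Rightarrow>
     (u0 + t * v0, u1 + t * v1, u2 + t * v2))"

definition line_poly :: "nat \<Rightarrow> (nat \<times> nat \<times> nat \<Rightarrow> 'k::field) \<Rightarrow> 'k \<times> 'k \<times> 'k \<Rightarrow> 'k \<times> 'k \<times> 'k \<Rightarrow> 'k poly" where
  "line_poly d F u v = (case u of (u0, u1, u2) \<Rightarrow> case v of (v0, v1, v2) \<Rightarrow>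
     \<Sum>(a, b, c)\<in>monoms d. Polynomial.smult (F (a, b, c)) ([:u0, v0:] ^ a * [:u1, v1:] ^ b * [:u2, v2:] ^ c))"

lemma poly_line_poly: "poly (line_poly d F u v) t = eval_form d F (line_point u v t)"
  by (cases u; cases v) (simp add: line_poly_def line_point_def eval_form_eq poly_sum case_prod_unfold algebra_simps)

lemma pderiv_sum: "pderiv (\<Sum>i\<in>A. f i) = (\<Sum>i\<in>A. pderiv (f i))"
  by (induction A rule: infinite_finite_induct) (auto simp: pderiv_add)

lemma poly_pderiv_line_poly: "poly (pderiv (line_poly d F u v)) t = dir_deriv d F (line_point u v t) v"
proof -
  obtain u0 u1 u2 v0 v1 v2 where uv: "u = (u0, u1, u2)" "v = (v0, v1, v2)"
    by (cases u; cases v) auto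
  let ?p = "(u0 + t * v0, u1 + t * v1, u2 + t * v2)"
  have monomial: "poly (pderiv ([:u0, v0:] ^ a * [:u1, v1:] ^ b * [:u2, v2:] ^ c)) t =
      v0 * pderiv_coeff (1, 0, 0) ?p (a, b, c) + v1 * pderiv_coeff (0, 1, 0) ?p (a, b, c)
      + v2 * pderiv_coeff (0, 0, 1) ?p (a, b, c)" for a b c
    by (simp add: pderiv_coeff_def pderiv_mult pderiv_power pderiv_pCons algebra_simps)
  have "poly (pderiv (line_poly d F u v)) t = (\<Sum>\<alpha>\<in>monoms d. F \<alpha> * dir_deriv_coeff ?p v \<alpha>)"
    unfolding line_poly_def uv prod.case pderiv_sum poly_sum
    by (intro sum.cong refl) (clarsimp simp: pderiv_smult monomial dir_deriv_coeff_def)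
  also have "\<dots> = dir_deriv d F (line_point u v t) v"
    by (simp add: uv line_point_def dir_deriv_eq_coeff_pair coeff_pair_def)
  finally show ?thesis .
qed

text \<open>Writing \<open>P = x^(k+1) R\<close> with \<open>R(0) \<noteq> 0\<close>, the coefficients of \<open>x^k\<close> in the identity give
  \<open>(k+1) Q(0) R(0) = 0\<close>, which is impossible in characteristic zero.\<close>

lemma poly_eq_0_if_wronskian_eq_0:
  fixes P Q :: "'k::field_char_0 poly"
  assumes Q0: "poly Q 0 \<noteq> 0" and P0: "poly P 0 = 0" and wronskian: "P * pderiv Q = Q * pderiv P"
  shows "P = 0"
proof (rule ccontr)
  assume "P \<noteq> 0"
  define X where "X = [:0, 1::'k:]"
  obtain R where R: "P = X ^ order 0 P * R" "\<not> X dvd R"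
    using order_decomp[OF \<open>P \<noteq> 0\<close>, of 0] unfolding X_def by auto
  obtain k where k: "order 0 P = Suc k"
    using P0 \<open>P \<noteq> 0\<close> order_root not0_implies_Suc by blast
  have R0: "poly R 0 \<noteq> 0"
    using R(2) poly_eq_0_iff_dvd[of R 0] unfolding X_def by simp
  have PR: "P = X ^ k * (X * R)"
    using R(1) unfolding k by (simp add: mult_ac)
  have dP: "pderiv P = X ^ k * (Polynomial.smult (of_nat (Suc k)) R + X * pderiv R)"
    by (subst R(1), unfold k pderiv_mult pderiv_power_Suc) (simp add: X_def pderiv_pCons algebra_simps)
  have "X ^ k * (X * R * pderiv Q) = X ^ k * (Q * (Polynomial.smult (of_nat (Suc k)) R + X * pderiv R))"
    using wronskian unfolding dP by (subst (asm) PR) (simp add: algebra_simps)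
  moreover have "X \<noteq> 0"
    by (simp add: X_def)
  ultimately have "X * R * pderiv Q = Q * (Polynomial.smult (of_nat (Suc k)) R + X * pderiv R)"
    by simp
  then have "poly (X * R * pderiv Q) 0 = poly (Q * (Polynomial.smult (of_nat (Suc k)) R + X * pderiv R)) 0"
    by simp
  then have "poly Q 0 * (of_nat (Suc k) * poly R 0) = 0"
    unfolding X_def by simp
  with Q0 R0 show False by (simp del: of_nat_Suc)
qed

lemma eval_form_eq_0_if_wronskian_eq_0:
  fixes G H :: "nat \<times> nat \<times> nat \<Rightarrow> 'k::field_char_0"
  assumes G_u: "eval_form d G u \<noteq> 0" and H_u: "eval_form d H u = 0"
    and W: "\<And>q w. wronskian d H G q w = 0"
  shows "eval_form d H p = 0"
proof -
  obtain u0 u1 u2 p0 p1 p2 where up: "u = (u0, u1, u2)" "p = (p0, p1, p2)"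
    by (cases u; cases p) auto
  define v where "v = (p0 - u0, p1 - u1, p2 - u2)"
  have line_0: "line_point u v 0 = u" and line_1: "line_point u v 1 = p"
    by (simp_all add: up v_def line_point_def)
  have "line_poly d H u v = 0"
  proof (rule poly_eq_0_if_wronskian_eq_0)
    show "poly (line_poly d G u v) 0 \<noteq> 0"
      using G_u by (simp add: poly_line_poly line_0)
    show "poly (line_poly d H u v) 0 = 0"
      using H_u by (simp add: poly_line_poly line_0)
    have "poly (line_poly d H u v * pderiv (line_poly d G u v)
        - line_poly d G u v * pderiv (line_poly d H u v)) t = 0" for t
      using W[of "line_point u v t" v] by (simp add: wronskian_def poly_line_poly poly_pderiv_line_poly)
    then show "line_poly d H u v * pderiv (line_poly d G u v) = line_poly d G u v * pderiv (line_poly d H u v)"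
      using poly_all_0_iff_0 by (metis eq_iff_diff_eq_0)
  qed
  then show ?thesis
    using poly_line_poly[of d H u v 1] by (simp add: line_1)
qed

lemma exists_wronskian_nonzero:
  fixes F G :: "nat \<times> nat \<times> nat \<Rightarrow> 'k::field_char_0"
  assumes F: "F \<in> forms d" and G: "G \<in> forms d" "G \<noteq> 0" and indep: "\<And>c. F \<noteq> (\<lambda>\<alpha>. c * G \<alpha>)"
  shows "\<exists>q w. wronskian d F G q w \<noteq> 0"
proof (rule ccontr)
  assume "\<not> (\<exists>q w. wronskian d F G q w \<noteq> 0)"
  then have W: "wronskian d F G q w = 0" for q w by blast
  obtain u where u: "eval_form d G u \<noteq> 0"
    using form_eq_0_if_vanishing[OF G(1)] G(2) by blast
  define c where "c = eval_form d F u / eval_form d G u"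
  define H where "H = (\<lambda>\<alpha>. F \<alpha> - c * G \<alpha>)"
  have H_u: "eval_form d H u = 0"
    using u unfolding H_def eval_form_diff_scale by (simp add: c_def)
  have "wronskian d H G q w = 0" for q w
    using W[of q w] by (simp add: H_def wronskian_def eval_form_diff_scale dir_deriv_diff_scale algebra_simps)
  then have "eval_form d H p = 0" for p
    using eval_form_eq_0_if_wronskian_eq_0[OF u H_u] by blast
  moreover have "H \<in> forms d"
    using F G(1) by (auto simp: forms_eq supported_on_def H_def)
  ultimately have "H = 0"
    using form_eq_0_if_vanishing by blast
  then have "F = (\<lambda>\<alpha>. c * G \<alpha>)"
    unfolding H_def by (simp add: fun_eq_iff)
  with indep show False
    by blast
qed

section \<open>The conditions imposed by the multiple point and the 2-dots\<close>

datatype condition = Deriv nat nat | Point nat | Tangent nat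

fun cond_coeff ::
  "condition \<Rightarrow> 'k::field \<times> 'k \<times> 'k \<Rightarrow> (nat \<Rightarrow> 'k \<times> 'k \<times> 'k) \<Rightarrow> (nat \<Rightarrow> 'k \<times> 'k \<times> 'k) \<Rightarrow> nat \<times> nat \<times> nat \<Rightarrow> 'k"
where
  "cond_coeff (Deriv i j) p q w = pderiv_coeff (i, j, 0) p"
| "cond_coeff (Point i) p q w = pderiv_coeff (0, 0, 0) (q i)"
| "cond_coeff (Tangent i) p q w = dir_deriv_coeff (q i) (w i)"

abbreviation cond_coeffs where
  "cond_coeffs p q w Rs \<equiv> map (\<lambda>r. cond_coeff r p q w) Rs"

definition pairs_below :: "nat \<Rightarrow> (nat \<times> nat) list" where
  "pairs_below m = concat (map (\<lambda>k. map (\<lambda>i. (i, k - i)) [0..<Suc k]) [0..<m])"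

lemma pairs_below_Suc: "pairs_below (Suc m) = pairs_below m @ map (\<lambda>i. (i, m - i)) [0..<Suc m]"
  by (simp add: pairs_below_def)

lemma set_pairs_below: "set (pairs_below m) = {(i, j). i + j < m}"
proof (induction m)
  case (Suc m)
  have "set (map (\<lambda>i. (i, m - i)) [0..<Suc m]) = {(i, j). i + j = m}"
    by force
  then show ?case
    unfolding pairs_below_Suc set_append Suc by auto
qed (simp add: pairs_below_def)

lemma distinct_pairs_below: "distinct (pairs_below m)"
  by (induction m) (auto simp: pairs_below_def distinct_map inj_on_def)

lemma length_pairs_below: "length (pairs_below m) = (m + 1) choose 2"
  by (induction m) (simp_all add: pairs_below_Suc numeral_2_eq_2, simp add: pairs_below_def)

definition conditions :: "nat \<Rightarrow> nat \<Rightarrow> condition list" where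
  "conditions m s = map (\<lambda>(i, j). Deriv i j) (pairs_below m) @ concat (map (\<lambda>i. [Point i, Tangent i]) [0..<s])"

lemma conditions_Suc: "conditions m (Suc s) = conditions m s @ [Point s, Tangent s]"
  by (simp add: conditions_def)

lemma length_conditions: "length (conditions m s) = ((m + 1) choose 2) + 2 * s"
proof (induction s)
  case 0
  then show ?case by (simp add: conditions_def length_pairs_below)
next
  case (Suc s)
  then show ?case by (simp add: conditions_Suc)
qed

lemma set_conditions:
  "set (conditions m s) = {Deriv i j | i j. i + j < m} \<union> {Point i | i. i < s} \<union> {Tangent i | i. i < s}"
  by (auto simp: conditions_def set_pairs_below)

lemma cond_coeffs_fun_upd:
  "set Rs \<subseteq> set (conditions m s) \<Longrightarrow> cond_coeffs p (q(s := a)) (w(s := b)) Rs = cond_coeffs p q w Rs"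
  by (intro map_cong refl) (auto simp: set_conditions)

lemma satisfies_conditions_iff:
  "(\<forall>r\<in>set (conditions m s). coeff_pair (monoms d) (cond_coeff r p q w) F = 0) \<longleftrightarrow>
    (\<forall>i j. i + j < m \<longrightarrow> pderiv_at d F (i, j, 0) p = 0) \<and>
    (\<forall>i<s. eval_form d F (q i) = 0 \<and> dir_deriv d F (q i) (w i) = 0)"
proof -
  have "(\<forall>r\<in>set (conditions m s). P r) \<longleftrightarrow>
      (\<forall>i j. i + j < m \<longrightarrow> P (Deriv i j)) \<and> (\<forall>i<s. P (Point i) \<and> P (Tangent i))" for P
    unfolding set_conditions by blast
  then show ?thesis
    by (simp add: pderiv_at_eq_coeff_pair dir_deriv_eq_coeff_pair eval_form_def)
qed

lemma H0_IX_eq_coeff_kernel: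
  assumes "p2 \<noteq> 0"
  shows "H0_IX d m (p0, p1, p2) s q w = coeff_kernel (monoms d) (cond_coeffs (p0, p1, p2) q w (conditions m s))"
  using satisfies_conditions_iff[of m s d "(p0, p1, p2)" q w]
  unfolding H0_IX_def coeff_kernel_def forms_eq in_mult_point_iff[OF assms]
  by (auto simp: in_2dot_iff)

definition nonsingular_minor ::
  "nat \<Rightarrow> 'k::field \<times> 'k \<times> 'k \<Rightarrow> (nat \<Rightarrow> 'k \<times> 'k \<times> 'k) \<Rightarrow> (nat \<Rightarrow> 'k \<times> 'k \<times> 'k)
    \<Rightarrow> condition list \<Rightarrow> (nat \<times> nat \<times> nat) list \<Rightarrow> bool"
where
  "nonsingular_minor d p q w Rs Cs \<longleftrightarrow> distinct Cs \<and> set Cs \<subseteq> monoms d \<and> length Cs = length Rs \<and>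
     det (coeff_mat (cond_coeffs p q w Rs) Cs) \<noteq> 0"

lemma card_free_columns:
  assumes "nonsingular_minor d p q w Rs Cs"
  shows "card (monoms d - set Cs) = card (monoms d) - length Rs"
  using assms by (simp add: nonsingular_minor_def card_Diff_subset distinct_card)

lemma special_solution_in_forms:
  assumes "special_solution (monoms d) Ks Cs b f" "set Cs \<subseteq> monoms d" "b \<in> monoms d - set Cs"
  shows "f \<in> forms d"
proof -
  have "insert b (set Cs) \<subseteq> monoms d"
    using assms(2,3) by simp
  then show ?thesis
    using assms(1) unfolding special_solution_def forms_eq supported_on_def by blast
qed

lemma obtain_two_elements:
  assumes "2 \<le> card A"
  obtains a b where "a \<in> A" "b \<in> A" "a \<noteq> b"
proof -
  have "finite A" "A \<noteq> {}"
    using assms card_gt_0_iff[of A] by auto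
  then obtain a where a: "a \<in> A"
    by blast
  then have "card (A - {a}) \<noteq> 0"
    using \<open>finite A\<close> assms by simp
  then have "A - {a} \<noteq> {}"
    by (intro notI) simp
  then obtain b where "b \<in> A - {a}"
    by blast
  with a that show ?thesis
    by blast
qed

lemma nonsingular_minor_mult_point:
  fixes q w :: "nat \<Rightarrow> 'k::field_char_0 \<times> 'k \<times> 'k"
  assumes "m \<le> d + 1"
  shows "nonsingular_minor d (0, 0, 1) q w (conditions m 0) (map (\<lambda>(i, j). (i, j, d - i - j)) (pairs_below m))"
    (is "nonsingular_minor d ?p q w ?Rs ?Cs")
proof -
  have Cs: "distinct ?Cs" "set ?Cs \<subseteq> monoms d" "length ?Cs = length (cond_coeffs ?p q w ?Rs)"
    using assms distinct_pairs_below
    by (auto simp: distinct_map inj_on_def set_pairs_below monoms_def conditions_def)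
  have "F = 0" if supp: "supported_on F (set ?Cs)"
    and sat: "\<forall>\<kappa>\<in>set (cond_coeffs ?p q w ?Rs). coeff_pair (monoms d) \<kappa> F = 0" for F :: "_ \<Rightarrow> 'k"
  proof -
    have "F (i, j, d - i - j) = 0" if "i + j < m" for i j
    proof -
      have "pderiv_at d F (i, j, 0) ?p = 0"
        using sat that satisfies_conditions_iff[of m 0 d ?p q w F] by simp
      moreover have "ffact i i * ffact j j \<noteq> (0::'k)"
        by (simp add: ffact_def)
      ultimately show ?thesis
        using that assms by (simp add: pderiv_at_0_0_1)
    qed
    then have "F \<alpha> = 0" for \<alpha>
    proof (cases "\<alpha> \<in> set ?Cs")
      case False
      then show ?thesis using supp unfolding supported_on_def by blast
    qed (auto simp: set_pairs_below)
    then show ?thesis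
      by (simp add: fun_eq_iff)
  qed
  then show ?thesis
    using Cs det_coeff_mat_nonzero_iff[OF finite_monoms Cs(2,1,3)] by (simp add: nonsingular_minor_def)
qed

lemma det_append_point:
  fixes Ks :: "(nat \<times> nat \<times> nat \<Rightarrow> 'k::field) list"
  assumes Cs: "set Cs \<subseteq> monoms d" "distinct Cs" "length Cs = length Ks" and det: "det (coeff_mat Ks Cs) \<noteq> 0"
    and b: "b \<in> monoms d - set Cs" and f: "special_solution (monoms d) Ks Cs b f"
    and a: "eval_form d f a \<noteq> 0"
  shows "det (coeff_mat (Ks @ [pderiv_coeff (0, 0, 0) a]) (Cs @ [b])) \<noteq> 0"
proof (rule det_coeff_mat_append_nonzero[OF finite_monoms Cs det, where f = "\<lambda>_. f"])
  fix c assume "\<forall>\<kappa>\<in>set [pderiv_coeff (0, 0, 0) a]. (\<Sum>b'\<in>set [b]. c b' * coeff_pair (monoms d) \<kappa> f) = 0"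
  then have "c b * eval_form d f a = 0"
    by (simp add: eval_form_def pderiv_at_eq_coeff_pair)
  then show "\<forall>b'\<in>set [b]. c b' = 0"
    using a by simp
qed (use b f in auto)

lemma det_append_2dot:
  fixes Ks :: "(nat \<times> nat \<times> nat \<Rightarrow> 'k::field) list"
  assumes Cs: "set Cs \<subseteq> monoms d" "distinct Cs" "length Cs = length Ks" and det: "det (coeff_mat Ks Cs) \<noteq> 0"
    and b: "b1 \<in> monoms d - set Cs" "b2 \<in> monoms d - set Cs" "b1 \<noteq> b2"
    and f: "special_solution (monoms d) Ks Cs b1 f1" "special_solution (monoms d) Ks Cs b2 f2"
    and W: "wronskian d f1 f2 a v \<noteq> 0"
  shows "det (coeff_mat (Ks @ [pderiv_coeff (0, 0, 0) a, dir_deriv_coeff a v]) (Cs @ [b1, b2])) \<noteq> 0"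
proof (rule det_coeff_mat_append_nonzero[OF finite_monoms Cs det, where f = "\<lambda>b. if b = b1 then f1 else f2"])
  fix c
  assume "\<forall>\<kappa>\<in>set [pderiv_coeff (0, 0, 0) a, dir_deriv_coeff a v].
    (\<Sum>b\<in>set [b1, b2]. c b * coeff_pair (monoms d) \<kappa> (if b = b1 then f1 else f2)) = 0"
  then have "c b1 * eval_form d f1 a + c b2 * eval_form d f2 a = 0"
    "c b1 * dir_deriv d f1 a v + c b2 * dir_deriv d f2 a v = 0"
    using b(3) by (simp_all add: eval_form_def pderiv_at_eq_coeff_pair dir_deriv_eq_coeff_pair)
  with W have "c b1 = 0 \<and> c b2 = 0"
    unfolding wronskian_def by (intro trivial_solution_2x2) (simp_all add: mult.commute)
  then show "\<forall>b\<in>set [b1, b2]. c b = 0"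
    by simp
qed (use b f in auto)

lemma nonsingular_minor_append_point:
  fixes p :: "'k::field_char_0 \<times> 'k \<times> 'k"
  assumes minor: "nonsingular_minor d p q w Rs Cs" and Rs: "set Rs \<subseteq> set (conditions m s)"
    and room: "length Rs < card (monoms d)"
  shows "\<exists>a Cs'. nonsingular_minor d p (q(s := a)) w (Rs @ [Point s]) Cs'"
proof -
  let ?Ks = "cond_coeffs p q w Rs"
  have Cs: "set Cs \<subseteq> monoms d" "distinct Cs" "length Cs = length ?Ks" and det: "det (coeff_mat ?Ks Cs) \<noteq> 0"
    using minor by (auto simp: nonsingular_minor_def)
  have "monoms d - set Cs \<noteq> {}"
    using card_free_columns[OF minor] room by (intro notI) simp
  then obtain b where b: "b \<in> monoms d - set Cs"
    by blast
  then obtain f where f: "special_solution (monoms d) ?Ks Cs b f"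
    using exists_special_solution[OF finite_monoms Cs det] by blast
  obtain a where a: "eval_form d f a \<noteq> 0"
    using form_eq_0_if_vanishing[OF special_solution_in_forms[OF f Cs(1)]] special_solution_nonzero[OF f] b
    by blast
  have old: "cond_coeffs p (q(s := a)) w Rs = ?Ks"
    using cond_coeffs_fun_upd[OF Rs, of p q a w "w s"] by (simp only: fun_upd_triv)
  have "nonsingular_minor d p (q(s := a)) w (Rs @ [Point s]) (Cs @ [b])"
    using Cs b det_append_point[OF Cs det b f a] unfolding nonsingular_minor_def map_append old by simp
  then show ?thesis by blast
qed

lemma nonsingular_minor_append_2dot:
  fixes p :: "'k::field_char_0 \<times> 'k \<times> 'k"
  assumes minor: "nonsingular_minor d p q w Rs Cs" and Rs: "set Rs \<subseteq> set (conditions m s)"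
    and room: "length Rs + 2 \<le> card (monoms d)"
  shows "\<exists>a v Cs'. nonsingular_minor d p (q(s := a)) (w(s := v)) (Rs @ [Point s, Tangent s]) Cs'"
proof -
  let ?Ks = "cond_coeffs p q w Rs"
  have Cs: "set Cs \<subseteq> monoms d" "distinct Cs" "length Cs = length ?Ks" and det: "det (coeff_mat ?Ks Cs) \<noteq> 0"
    using minor by (auto simp: nonsingular_minor_def)
  have "2 \<le> card (monoms d - set Cs)"
    using card_free_columns[OF minor] room by simp
  then obtain b1 b2 where b: "b1 \<in> monoms d - set Cs" "b2 \<in> monoms d - set Cs" "b1 \<noteq> b2"
    by (rule obtain_two_elements)
  obtain f1 f2 where f: "special_solution (monoms d) ?Ks Cs b1 f1" "special_solution (monoms d) ?Ks Cs b2 f2"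
    using exists_special_solution[OF finite_monoms Cs det] b(1,2) by blast
  have f_b1: "f1 b1 = 1" "f2 b1 = 0"
    using special_solution_free_column[OF f(1)] special_solution_free_column[OF f(2)] b by auto
  have "f1 \<noteq> (\<lambda>\<alpha>. c * f2 \<alpha>)" for c
  proof
    assume "f1 = (\<lambda>\<alpha>. c * f2 \<alpha>)"
    then have "f1 b1 = c * f2 b1" by simp
    with f_b1 show False by simp
  qed
  then obtain a v where W: "wronskian d f1 f2 a v \<noteq> 0"
    using exists_wronskian_nonzero special_solution_in_forms[OF f(1) Cs(1)] special_solution_in_forms[OF f(2) Cs(1)]
      special_solution_nonzero[OF f(2)] b(1,2) by blast
  have old: "cond_coeffs p (q(s := a)) (w(s := v)) Rs = ?Ks"
    by (rule cond_coeffs_fun_upd[OF Rs])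
  have "nonsingular_minor d p (q(s := a)) (w(s := v)) (Rs @ [Point s, Tangent s]) (Cs @ [b1, b2])"
    using Cs b det_append_2dot[OF Cs det b f W] unfolding nonsingular_minor_def map_append old by simp
  then show ?thesis by blast
qed

lemma nonsingular_minor_Suc:
  fixes p :: "'k::field_char_0 \<times> 'k \<times> 'k"
  assumes minor: "nonsingular_minor d p q w (take (card (monoms d)) (conditions m s)) Cs"
  shows "\<exists>q' w' Cs'. nonsingular_minor d p q' w' (take (card (monoms d)) (conditions m (Suc s))) Cs'"
proof -
  let ?N = "card (monoms d)" and ?L = "length (conditions m s)" and ?Rs = "take (card (monoms d)) (conditions m s)"
  have Rs: "set ?Rs \<subseteq> set (conditions m s)"
    by (rule set_take_subset)
  consider "?N \<le> ?L" | "?L + 1 = ?N" | "?L + 2 \<le> ?N"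
    by linarith
  then show ?thesis
  proof cases
    case 1
    then have "take ?N (conditions m (Suc s)) = ?Rs"
      by (simp add: conditions_Suc)
    with minor show ?thesis by auto
  next
    case 2
    then have "?N - ?L = Suc 0"
      by simp
    with 2 have take: "take ?N (conditions m (Suc s)) = ?Rs @ [Point s]"
      by (simp add: conditions_Suc)
    from 2 have "length ?Rs < ?N"
      by simp
    then obtain a Cs' where "nonsingular_minor d p (q(s := a)) w (?Rs @ [Point s]) Cs'"
      using nonsingular_minor_append_point[OF minor Rs] by blast
    then show ?thesis
      unfolding take by blast
  next
    case 3
    then have take: "take ?N (conditions m (Suc s)) = ?Rs @ [Point s, Tangent s]"
      by (simp add: conditions_Suc)
    from 3 have "length ?Rs + 2 \<le> ?N"
      by simp
    then obtain a v Cs' where "nonsingular_minor d p (q(s := a)) (w(s := v)) (?Rs @ [Point s, Tangent s]) Cs'"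
      using nonsingular_minor_append_2dot[OF minor Rs] by blast
    then show ?thesis
      unfolding take by blast
  qed
qed

lemma exists_nonsingular_minor:
  assumes "m \<le> d + 1"
  shows "\<exists>q w Cs. nonsingular_minor d (0, 0, 1 :: 'k::field_char_0) q w (take (card (monoms d)) (conditions m s)) Cs"
proof (induction s)
  case 0
  have "length (conditions m 0) \<le> card (monoms d)"
    using assms by (simp add: length_conditions card_monoms binomial_right_mono)
  then have take: "take (card (monoms d)) (conditions m 0) = conditions m 0"
    by simp
  show ?case
    unfolding take by (intro exI) (rule nonsingular_minor_mult_point[OF assms])
next
  case (Suc s)
  then show ?case
    using nonsingular_minor_Suc by blast
qed

lemma h0_IX_eq:
  fixes p2 :: "'k::field"
  assumes "p2 \<noteq> 0"
    and minor: "nonsingular_minor d (p0, p1, p2) q w (take (card (monoms d)) (conditions m s)) Cs"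
  shows "h0_IX d m (p0, p1, p2) s q w = card (monoms d) - length (conditions m s)"
proof -
  let ?Rs = "take (card (monoms d)) (conditions m s)"
  let ?Ks = "cond_coeffs (p0, p1, p2) q w ?Rs"
  have Cs: "set Cs \<subseteq> monoms d" "distinct Cs" "length Cs = length ?Ks" and det: "det (coeff_mat ?Ks Cs) \<noteq> 0"
    using minor by (auto simp: nonsingular_minor_def)
  have H0: "h0_IX d m (p0, p1, p2) s q w = vector_space.dim (\<lambda>c F x. c * F x)
      (coeff_kernel (monoms d) (cond_coeffs (p0, p1, p2) q w (conditions m s)))"
    by (simp add: h0_IX_def H0_IX_eq_coeff_kernel[OF assms(1)])
  show ?thesis
  proof (cases "length (conditions m s) \<le> card (monoms d)")
    case True
    then show ?thesis
      using dim_coeff_kernel[OF finite_monoms Cs det] by (simp add: H0)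
  next
    case False
    then have "length ?Ks = card (monoms d)"
      by simp
    moreover have "set ?Ks \<subseteq> set (cond_coeffs (p0, p1, p2) q w (conditions m s))"
      by (simp add: image_mono set_take_subset)
    ultimately show ?thesis
      using False dim_coeff_kernel_eq_0[OF finite_monoms Cs det] by (simp add: H0)
  qed
qed

section \<open>Evaluation of multivariate polynomials\<close>

type_synonym 'k mpoly = "(nat \<Rightarrow>\<^sub>0 nat) \<Rightarrow>\<^sub>0 'k"

definition monomial_eval :: "(nat \<Rightarrow>\<^sub>0 nat) \<Rightarrow> (nat \<Rightarrow> 'k::field) \<Rightarrow> 'k" where
  "monomial_eval \<alpha> x = (\<Prod>i\<in>Poly_Mapping.keys \<alpha>. x i ^ Poly_Mapping.lookup \<alpha> i)"

lemma monomial_eval_superset: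
  assumes "finite S" "Poly_Mapping.keys \<alpha> \<subseteq> S"
  shows "monomial_eval \<alpha> x = (\<Prod>i\<in>S. x i ^ Poly_Mapping.lookup \<alpha> i)"
  unfolding monomial_eval_def
  by (rule prod.mono_neutral_left) (use assms in \<open>auto simp: in_keys_iff\<close>)

lemma monomial_eval_add: "monomial_eval (a + b) x = monomial_eval a x * monomial_eval b x"
proof -
  let ?S = "Poly_Mapping.keys a \<union> Poly_Mapping.keys b"
  have "monomial_eval (a + b) x = (\<Prod>i\<in>?S. x i ^ Poly_Mapping.lookup (a + b) i)"
    by (rule monomial_eval_superset[OF _ keys_add]) simp
  also have "\<dots> = (\<Prod>i\<in>?S. x i ^ Poly_Mapping.lookup a i) * (\<Prod>i\<in>?S. x i ^ Poly_Mapping.lookup b i)"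
    by (simp add: lookup_add power_add prod.distrib)
  also have "\<dots> = monomial_eval a x * monomial_eval b x"
    using monomial_eval_superset[of ?S a x] monomial_eval_superset[of ?S b x] by simp
  finally show ?thesis .
qed

lemma mpoly_eval_eq:
  "mpoly_eval G x = (\<Sum>\<alpha>\<in>Poly_Mapping.keys G. Poly_Mapping.lookup G \<alpha> * monomial_eval \<alpha> x)"
  by (simp add: mpoly_eval_def monomial_eval_def)

lemma mpoly_eval_0 [simp]: "mpoly_eval 0 x = 0"
  by (simp add: mpoly_eval_def)

lemma mpoly_eval_1 [simp]: "mpoly_eval 1 x = 1"
  by (simp add: mpoly_eval_def)

lemma mpoly_eval_single [simp]:
  "mpoly_eval (Poly_Mapping.single \<alpha> c) x = c * monomial_eval \<alpha> x"
  by (simp add: mpoly_eval_eq)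

lemma mpoly_eval_add: "mpoly_eval (f + g) x = mpoly_eval f x + mpoly_eval g x"
  unfolding mpoly_eval_eq by (rule setsum_keys_plus_distrib) (auto simp: distrib_right)

lemma mpoly_eval_sum: "mpoly_eval (\<Sum>i\<in>A. f i) x = (\<Sum>i\<in>A. mpoly_eval (f i) x)"
  by (induction A rule: infinite_finite_induct) (auto simp: mpoly_eval_add)

lemma mpoly_eq_sum_single:
  "G = (\<Sum>\<alpha>\<in>Poly_Mapping.keys G. Poly_Mapping.single \<alpha> (Poly_Mapping.lookup G \<alpha>))"
proof (rule poly_mapping_eqI)
  fix \<alpha>
  show "Poly_Mapping.lookup G \<alpha> =
    Poly_Mapping.lookup (\<Sum>\<alpha>\<in>Poly_Mapping.keys G. Poly_Mapping.single \<alpha> (Poly_Mapping.lookup G \<alpha>)) \<alpha>"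
    unfolding lookup_sum by (cases "\<alpha> \<in> Poly_Mapping.keys G") (simp_all add: lookup_single in_keys_iff when_def)
qed

lemma mpoly_eval_mult: "mpoly_eval (f * g) x = mpoly_eval f x * mpoly_eval g x"
proof -
  have "f * g = (\<Sum>a\<in>Poly_Mapping.keys f. \<Sum>b\<in>Poly_Mapping.keys g.
      Poly_Mapping.single (a + b) (Poly_Mapping.lookup f a * Poly_Mapping.lookup g b))"
    by (subst mpoly_eq_sum_single[of f], subst mpoly_eq_sum_single[of g])
      (simp add: sum_distrib_left sum_distrib_right mult_single, rule sum.swap)
  then have "mpoly_eval (f * g) x = (\<Sum>a\<in>Poly_Mapping.keys f. \<Sum>b\<in>Poly_Mapping.keys g.
      Poly_Mapping.lookup f a * Poly_Mapping.lookup g b * monomial_eval (a + b) x)"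
    by (simp add: mpoly_eval_sum)
  also have "\<dots> = mpoly_eval f x * mpoly_eval g x"
    by (simp add: mpoly_eval_eq monomial_eval_add sum_distrib_left sum_distrib_right mult_ac)
      (subst sum.swap, simp add: mult_ac)
  finally show ?thesis .
qed

interpretation mpoly_eval_hom: comm_ring_hom "\<lambda>G. mpoly_eval G x" for x
  by unfold_locales (simp_all add: mpoly_eval_add mpoly_eval_mult)

definition mpoly_var :: "nat \<Rightarrow> 'k::field mpoly" where
  "mpoly_var i = Poly_Mapping.single (Poly_Mapping.single i 1) 1"

definition mpoly_const :: "'k::field \<Rightarrow> 'k mpoly" where
  "mpoly_const c = Poly_Mapping.single 0 c"

lemma mpoly_eval_var [simp]: "mpoly_eval (mpoly_var i) x = x i"
  by (simp add: mpoly_var_def monomial_eval_def)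

lemma mpoly_eval_const [simp]: "mpoly_eval (mpoly_const c) x = c"
  by (simp add: mpoly_const_def monomial_eval_def)

lemma mpoly_in_vars_0 [simp]: "mpoly_in_vars 0 V"
  and mpoly_in_vars_1 [simp]: "mpoly_in_vars 1 V"
  by (simp_all add: mpoly_in_vars_def)

lemma mpoly_in_vars_add:
  assumes "mpoly_in_vars f V" "mpoly_in_vars g V"
  shows "mpoly_in_vars (f + g) V"
  using assms keys_add[of f g] unfolding mpoly_in_vars_def by blast

lemma mpoly_in_vars_mult:
  assumes f: "mpoly_in_vars f V" and g: "mpoly_in_vars g V"
  shows "mpoly_in_vars (f * g) V"
  unfolding mpoly_in_vars_def
proof
  fix \<alpha> assume "\<alpha> \<in> Poly_Mapping.keys (f * g)"
  then obtain a b where "\<alpha> = a + b" "a \<in> Poly_Mapping.keys f" "b \<in> Poly_Mapping.keys g"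
    using keys_mult[of f g] by blast
  then show "Poly_Mapping.keys \<alpha> \<subseteq> V"
    using f g keys_add[of a b] unfolding mpoly_in_vars_def by blast
qed

lemma mpoly_in_vars_single:
  "Poly_Mapping.keys \<alpha> \<subseteq> V \<Longrightarrow> mpoly_in_vars (Poly_Mapping.single \<alpha> c) V"
  by (simp add: mpoly_in_vars_def)

lemma mpoly_in_vars_const: "mpoly_in_vars (mpoly_const c) V"
  by (simp add: mpoly_const_def mpoly_in_vars_single)

lemma mpoly_in_vars_var: "i \<in> V \<Longrightarrow> mpoly_in_vars (mpoly_var i) V"
  by (simp add: mpoly_var_def mpoly_in_vars_single)

lemma mpoly_in_vars_power: "mpoly_in_vars f V \<Longrightarrow> mpoly_in_vars (f ^ n) V"
  by (induction n) (auto intro: mpoly_in_vars_mult)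

lemma mpoly_in_vars_sum:
  "(\<And>i. i \<in> A \<Longrightarrow> mpoly_in_vars (f i) V) \<Longrightarrow> mpoly_in_vars (\<Sum>i\<in>A. f i) V"
  by (induction A rule: infinite_finite_induct) (auto intro: mpoly_in_vars_add)

lemma mpoly_in_vars_prod:
  "(\<And>i. i \<in> A \<Longrightarrow> mpoly_in_vars (f i) V) \<Longrightarrow> mpoly_in_vars (\<Prod>i\<in>A. f i) V"
  by (induction A rule: infinite_finite_induct) (auto intro: mpoly_in_vars_mult)

lemma mpoly_in_vars_det:
  assumes "\<And>i j. i < dim_row A \<Longrightarrow> j < dim_col A \<Longrightarrow> mpoly_in_vars (A $$ (i,j)) V"
  shows "mpoly_in_vars (det A) V"
proof (cases "dim_row A = dim_col A")
  case True
  have "mpoly_in_vars (signof p * (\<Prod>i = 0..<dim_row A. A $$ (i, p i))) V"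
    if "p permutes {0..<dim_row A}" for p
  proof (rule mpoly_in_vars_mult)
    show "mpoly_in_vars (signof p) V"
      by (simp add: single_of_int[symmetric] mpoly_in_vars_single del: single_of_int)
    show "mpoly_in_vars (\<Prod>i = 0..<dim_row A. A $$ (i, p i)) V"
      using that True by (intro mpoly_in_vars_prod assms) (auto simp: permutes_in_image)
  qed
  then show ?thesis
    unfolding det_def using True by (auto intro: mpoly_in_vars_sum)
qed (simp add: det_def)

section \<open>The genericity polynomial\<close>

definition pderiv_coeff_poly :: "nat \<times> nat \<times> nat \<Rightarrow> nat \<Rightarrow> nat \<times> nat \<times> nat \<Rightarrow> 'k::field mpoly" where
  "pderiv_coeff_poly ijl v \<alpha> = (case ijl of (i, j, l) \<Rightarrow> case \<alpha> of (a, b, c) \<Rightarrow>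
     mpoly_const (ffact a i * ffact b j * ffact c l) * mpoly_var v ^ (a - i) * mpoly_var (v + 1) ^ (b - j)
       * mpoly_var (v + 2) ^ (c - l))"

lemma mpoly_eval_pderiv_coeff_poly:
  "mpoly_eval (pderiv_coeff_poly ijl v \<alpha>) x = pderiv_coeff ijl (x v, x (v + 1), x (v + 2)) \<alpha>"
  by (cases ijl; cases \<alpha>) (simp add: pderiv_coeff_poly_def pderiv_coeff_def mpoly_eval_mult mpoly_eval_hom.hom_power)

lemma mpoly_in_vars_pderiv_coeff_poly:
  "{v, v + 1, v + 2} \<subseteq> V \<Longrightarrow> mpoly_in_vars (pderiv_coeff_poly ijl v \<alpha>) V"
  by (cases ijl; cases \<alpha>)
    (simp add: pderiv_coeff_poly_def mpoly_in_vars_mult mpoly_in_vars_power mpoly_in_vars_var mpoly_in_vars_const)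

text \<open>The coordinates of \<open>P\<close> are the variables \<open>0, 1, 2\<close>; those of \<open>Q\<^sub>i\<close> and of its tangent vector
  start at \<open>3 + 6 i\<close> and \<open>3 + 6 i + 3\<close>, as in \<^const>\<open>par_q\<close> and \<^const>\<open>par_w\<close>.\<close>

fun cond_coeff_poly :: "condition \<Rightarrow> nat \<times> nat \<times> nat \<Rightarrow> 'k::field mpoly" where
  "cond_coeff_poly (Deriv i j) \<alpha> = pderiv_coeff_poly (i, j, 0) 0 \<alpha>"
| "cond_coeff_poly (Point i) \<alpha> = pderiv_coeff_poly (0, 0, 0) (3 + 6 * i) \<alpha>"
| "cond_coeff_poly (Tangent i) \<alpha> =
     mpoly_var (3 + 6 * i + 3) * pderiv_coeff_poly (1, 0, 0) (3 + 6 * i) \<alpha>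
     + mpoly_var (3 + 6 * i + 4) * pderiv_coeff_poly (0, 1, 0) (3 + 6 * i) \<alpha>
     + mpoly_var (3 + 6 * i + 5) * pderiv_coeff_poly (0, 0, 1) (3 + 6 * i) \<alpha>"

lemma mpoly_eval_cond_coeff_poly:
  "mpoly_eval (cond_coeff_poly r \<alpha>) x = cond_coeff r (par_p x) (par_q x) (par_w x) \<alpha>"
  by (cases r) (simp_all add: mpoly_eval_pderiv_coeff_poly mpoly_eval_add mpoly_eval_mult dir_deriv_coeff_def
      par_p_def par_q_def par_w_def add.assoc numeral_2_eq_2)

lemma mpoly_in_vars_cond_coeff_poly:
  "r \<in> set (conditions m s) \<Longrightarrow> mpoly_in_vars (cond_coeff_poly r \<alpha>) {..<3 + 6 * s}"
  by (auto simp: set_conditions intro!: mpoly_in_vars_add mpoly_in_vars_mult mpoly_in_vars_var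
      mpoly_in_vars_pderiv_coeff_poly)

definition minor_poly :: "condition list \<Rightarrow> (nat \<times> nat \<times> nat) list \<Rightarrow> 'k::field mpoly" where
  "minor_poly Rs Cs = det (mat (length Rs) (length Cs) (\<lambda>(i, j). cond_coeff_poly (Rs ! i) (Cs ! j)))"

lemma mpoly_eval_minor_poly:
  "mpoly_eval (minor_poly Rs Cs) x = det (coeff_mat (cond_coeffs (par_p x) (par_q x) (par_w x) Rs) Cs)"
proof -
  have "map_mat (\<lambda>G. mpoly_eval G x) (mat (length Rs) (length Cs) (\<lambda>(i, j). cond_coeff_poly (Rs ! i) (Cs ! j)))
      = coeff_mat (cond_coeffs (par_p x) (par_q x) (par_w x) Rs) Cs"
    by (intro eq_matI) (auto simp: coeff_mat_def mpoly_eval_cond_coeff_poly)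
  then show ?thesis
    unfolding minor_poly_def by (metis mpoly_eval_hom.hom_det)
qed

lemma mpoly_in_vars_minor_poly:
  "set Rs \<subseteq> set (conditions m s) \<Longrightarrow> mpoly_in_vars (minor_poly Rs Cs) {..<3 + 6 * s}"
  unfolding minor_poly_def
  by (intro mpoly_in_vars_det) (auto intro!: mpoly_in_vars_cond_coeff_poly)

lemma exists_param_vector: "\<exists>x. par_p x = p \<and> par_q x = q \<and> par_w x = w"
proof -
  define x where "x n = (if n < 3 then [fst p, fst (snd p), snd (snd p)] ! n
      else let i = (n - 3) div 6 in
        [fst (q i), fst (snd (q i)), snd (snd (q i)), fst (w i), fst (snd (w i)), snd (snd (w i))] ! ((n - 3) mod 6))"
    for n
  have block: "x (3 + 6 * i + k) =
      [fst (q i), fst (snd (q i)), snd (snd (q i)), fst (w i), fst (snd (w i)), snd (snd (w i))] ! k"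
    if "k < 6" for i k
    using that by (simp add: x_def)
  have "par_p x = p"
    by (simp add: x_def par_p_def)
  moreover have "par_q x i = q i" "par_w x i = w i" for i
    using block[of 0 i] block[of 1 i] block[of 2 i] block[of 3 i] block[of 4 i] block[of 5 i]
    by (simp_all add: par_q_def par_w_def)
  ultimately show ?thesis
    by blast
qed

lemma exists_genericity_poly:
  assumes "m \<le> d + 1"
  shows "\<exists>G :: 'k::field_char_0 mpoly. G \<noteq> 0 \<and> mpoly_in_vars G {..<3 + 6 * s} \<and>
    (\<forall>x. mpoly_eval G x \<noteq> 0 \<longrightarrow>
      h0_IX d m (par_p x) s (par_q x) (par_w x) = card (monoms d) - length (conditions m s))"
proof -
  let ?Rs = "take (card (monoms d)) (conditions m s)"
  obtain q w Cs where minor: "nonsingular_minor d (0, 0, 1 :: 'k) q w ?Rs Cs"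
    using exists_nonsingular_minor[OF assms] by blast
  define G :: "'k mpoly" where "G = mpoly_var 2 * minor_poly ?Rs Cs"
  have eval_G: "mpoly_eval G x = x 2 * det (coeff_mat (cond_coeffs (par_p x) (par_q x) (par_w x) ?Rs) Cs)" for x
    by (simp add: G_def mpoly_eval_mult mpoly_eval_minor_poly)
  obtain x0 where x0: "par_p x0 = (0, 0, 1)" "par_q x0 = q" "par_w x0 = w"
    using exists_param_vector by blast
  then have "x0 2 = 1"
    by (simp add: par_p_def)
  then have "mpoly_eval G x0 \<noteq> 0"
    using minor unfolding eval_G x0 nonsingular_minor_def by simp
  then have "G \<noteq> 0"
    by auto
  moreover have "mpoly_in_vars G {..<3 + 6 * s}"
    unfolding G_def by (intro mpoly_in_vars_mult mpoly_in_vars_var mpoly_in_vars_minor_poly[OF set_take_subset]) simp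
  moreover have "h0_IX d m (par_p x) s (par_q x) (par_w x) = card (monoms d) - length (conditions m s)"
    if "mpoly_eval G x \<noteq> 0" for x
  proof -
    have "x 2 \<noteq> 0" "nonsingular_minor d (x 0, x 1, x 2) (par_q x) (par_w x) ?Rs Cs"
      using that minor eval_G[of x] by (auto simp: nonsingular_minor_def par_p_def)
    then show ?thesis
      unfolding par_p_def by (rule h0_IX_eq)
  qed
  ultimately show ?thesis
    by blast
qed

text \<open>The factor \<open>x 2\<close> of \<open>G\<close> makes the
  hypothesis \<open>P \<noteq> 0\<close> redundant, and the tangent vectors need not be independent of the \<open>Q\<^sub>i\<close>.\<close>

theorem lemma2p6:
  fixes s m d :: nat
  assumes "alg_closed TYPE('k::field_char_0)"
    and "d + 1 \<ge> m"
  shows "\<exists>G :: (nat \<Rightarrow>\<^sub>0 nat) \<Rightarrow>\<^sub>0 'k. G \<noteq> 0 \<and> mpoly_in_vars G {..<3 + 6*s} \<and>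
    (\<forall>x :: nat \<Rightarrow> 'k. mpoly_eval G x \<noteq> 0 \<and> par_p x \<noteq> (0,0,0) \<and>
        (\<forall>i<s. indep2 (par_q x i) (par_w x i)) \<longrightarrow>
      int (h0_IX d m (par_p x) s (par_q x) (par_w x))
        = max (int ((d+2) choose 2) - int ((m+1) choose 2) - 2 * int s) 0)"
proof -
  obtain G :: "'k mpoly" where G: "G \<noteq> 0" "mpoly_in_vars G {..<3 + 6 * s}"
    and h0: "\<And>x. mpoly_eval G x \<noteq> 0 \<Longrightarrow>
      h0_IX d m (par_p x) s (par_q x) (par_w x) = card (monoms d) - length (conditions m s)"
    using exists_genericity_poly[OF assms(2)] by blast
  have "int (a - (b + 2 * s)) = max (int a - int b - 2 * int s) 0" for a b :: nat
    by linarith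
  then show ?thesis
    using G h0 by (auto simp: card_monoms length_conditions)
qed

end
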